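(* Let $\mathbf{A}:\mathbb{R}^{2\times 2}\to\mathbb{R}^2$ be the Cauchy–Riemann map $\mathbf{A}:X=(X_{11}+X_{22},\,X_{21}-X_{12})$. Fix constants $b,c>0$ with $b+c<1$ and $\sqrt2\,c+b>1$, and a unit vector $\eta\in\mathbb{R}^2$. Define $F(x,X):=\mathbf{A}:X+\eta\big(b|X|+c|\mathbf{A}:X|\big)$ for $x\in\mathbb{R}^2$, $X\in\mathbb{R}^{2\times2}$. Then for all $X,Y\in\mathbb{R}^{2\times2}$, $$\big|[F(x,X+Y)-F(x,X)]-\mathbf{A}:Y\big|\leq b\,\nu(\mathbf{A})|Y|+c|\mathbf{A}:Y|,$$ so $F$ satisfies the AK-Condition with respect to $\mathbf{A}$ with $\alpha\equiv1$, $\beta=b$, $\gamma=c$; but there is no $\beta\in(0,1)$ for which $\big|[F(x,X+Y)-F(x,X)]-\mathbf{A}:Y\big|\leq\beta\,\nu(\mathbf{A})|Y|$ holds for all $X,Y$, i.e. $F$ does not satisfy the K-Condition with respect to $\mathbf{A}$.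
   Context: For $X\in\mathbb{R}^{2\times2}$, $|X|$ is the Frobenius norm; $\nu(\mathbf{A}):=\min_{|\eta|=|a|=1}|\mathbf{A}:\eta\otimes a|$, where $\eta\otimes a$ is the matrix with entries $\eta_\beta a_j$ (for the Cauchy–Riemann map, $\nu(\mathbf{A})=1$). AK-Condition: $F$ satisfies it with respect to $\mathbf{A}$ if there exist a positive function $\alpha$ with $\alpha,1/\alpha\in L^\infty$ and $\beta,\gamma>0$ with $\beta+\gamma<1$ such that for all $X,Y$ and a.e. $x$: $\big|\alpha(x)[F(x,X+Y)-F(x,Y)]-\mathbf{A}:X\big|\leq\beta\,\nu(\mathbf{A})|X|+\gamma|\mathbf{A}:X|$. K-Condition: $F$ satisfies it with respect to $\mathbf{A}$ if there exists $0<\beta<1$ such that for all $X,Y$ and a.e. $x$: $\big|[F(x,X+Y)-F(x,X)]-\mathbf{A}:Y\big|\leq\beta\,\nu(\mathbf{A})|Y|$. *)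

theory Defs
  imports "HOL-Analysis.Analysis"
begin

text \<open>Matrices in R^{2x2} are elements of real^2^2, with X$i$j the (i,j) entry.
  The library norm on real^2^2 is the Frobenius norm.\<close>

definition tensor :: "real^2 \<Rightarrow> real^2 \<Rightarrow> real^2^2" where
  "tensor \<eta> a = (\<chi> i j. \<eta>$i * a$j)"

definition nu :: "(real^2^2 \<Rightarrow> real^2) \<Rightarrow> real" where
  "nu A = Inf {norm (A (tensor \<eta> a)) | \<eta> a. norm \<eta> = 1 \<and> norm a = 1}"

definition CR :: "real^2^2 \<Rightarrow> real^2" where
  "CR X = vector [X$1$1 + X$2$2, X$2$1 - X$1$2]"

definition AK_condition :: "(real^2^2 \<Rightarrow> real^2) \<Rightarrow> (real^2 \<Rightarrow> real^2^2 \<Rightarrow> real^2) \<Rightarrow> bool" where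
  "AK_condition A F \<longleftrightarrow>
     (\<exists>\<alpha> \<beta> \<gamma>. \<alpha> \<in> borel_measurable lborel \<and> (\<forall>x. \<alpha> x > 0)
        \<and> (\<exists>M. AE x in lborel. \<bar>\<alpha> x\<bar> \<le> M) \<and> (\<exists>M. AE x in lborel. \<bar>1 / \<alpha> x\<bar> \<le> M)
        \<and> \<beta> > 0 \<and> \<gamma> > 0 \<and> \<beta> + \<gamma> < 1
        \<and> (AE x in lborel. \<forall>X Y.
             norm (\<alpha> x *\<^sub>R (F x (X + Y) - F x Y) - A X) \<le> \<beta> * nu A * norm X + \<gamma> * norm (A X)))"

definition K_condition :: "(real^2^2 \<Rightarrow> real^2) \<Rightarrow> (real^2 \<Rightarrow> real^2^2 \<Rightarrow> real^2) \<Rightarrow> bool" where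
  "K_condition A F \<longleftrightarrow>
     (\<exists>\<beta>. 0 < \<beta> \<and> \<beta> < 1
        \<and> (AE x in lborel. \<forall>X Y.
             norm ((F x (X + Y) - F x X) - A Y) \<le> \<beta> * nu A * norm Y))"

end

theory Submission
  imports Defs
begin

text \<open>Since \<open>F x X - CR X\<close> is a multiple of the unit vector \<open>\<eta>\<close>, the increment
  \<open>F x (X + Y) - F x X - CR Y\<close> is \<open>\<eta>\<close> times \<open>b (|X + Y| - |X|) + c (|CR (X + Y)| - |CR X|)\<close>,
  which the reverse triangle inequality bounds by \<open>b |Y| + c |CR Y|\<close>; this gives the AK-Condition
  with \<open>\<alpha> = 1\<close>, as \<open>\<nu>(CR) = 1\<close>. At \<open>X = 0\<close> the bound is attained, so any K-Condition constant
  \<open>\<beta>\<close> satisfies \<open>\<beta> |Y| \<ge> b |Y| + c |CR Y|\<close>; the identity matrix \<open>Y\<close> has \<open>|Y| = \<surd>2\<close> and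
  \<open>|CR Y| = 2\<close>, forcing \<open>\<beta> \<ge> b + \<surd>2 c > 1\<close>.\<close>

lemma linear_CR: "linear CR"
  unfolding CR_def by (intro linearI) (simp_all add: vec_eq_iff forall_2 algebra_simps)

lemma norm_vec2: "norm (v :: real^2) = sqrt ((v$1)\<^sup>2 + (v$2)\<^sup>2)"
  unfolding norm_vec_def L2_set_def by (simp add: sum_2)

lemma norm_CR_tensor: "norm (CR (tensor \<eta> a)) = norm \<eta> * norm a"
proof -
  have "(\<eta>$1 * a$1 + \<eta>$2 * a$2)\<^sup>2 + (\<eta>$2 * a$1 - \<eta>$1 * a$2)\<^sup>2
        = ((\<eta>$1)\<^sup>2 + (\<eta>$2)\<^sup>2) * ((a$1)\<^sup>2 + (a$2)\<^sup>2)"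
    by (simp add: power2_eq_square algebra_simps)
  then show ?thesis
    unfolding norm_vec2 CR_def tensor_def by (simp add: real_sqrt_mult)
qed

lemma nu_CR: "nu CR = 1"
proof -
  let ?e = "vector [1, 0] :: real^2"
  have "norm ?e = 1"
    unfolding norm_vec2 by simp
  then have "{norm (CR (tensor \<eta> a)) | \<eta> a. norm \<eta> = 1 \<and> norm a = 1} = {1}"
    by (auto simp: norm_CR_tensor) (metis \<open>norm ?e = 1\<close> mult_1)
  then show ?thesis
    unfolding nu_def by simp
qed

lemma norm_mat_1_vec2: "norm (mat 1 :: real^2^2) = sqrt 2"
  unfolding norm_vec_def L2_set_def by (simp add: sum_2 norm_vec2 mat_def)

lemma norm_CR_mat_1: "norm (CR (mat 1)) = 2"
  unfolding CR_def norm_vec2 by (simp add: mat_def)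

lemma norm_increment_perturbed_linear:
  fixes A :: "'a::real_normed_vector \<Rightarrow> 'b::real_normed_vector" and \<eta> :: 'b
  assumes "linear A" and "b \<ge> 0" and "c \<ge> 0" and "norm \<eta> = 1"
    and F: "\<And>X. F X = A X + (b * norm X + c * norm (A X)) *\<^sub>R \<eta>"
  shows "norm (F (X + Y) - F X - A Y)
    = \<bar>b * (norm (X + Y) - norm X) + c * (norm (A X + A Y) - norm (A X))\<bar>"
proof -
  have "F (X + Y) - F X - A Y
      = (b * (norm (X + Y) - norm X) + c * (norm (A X + A Y) - norm (A X))) *\<^sub>R \<eta>"
    unfolding F linear_add[OF \<open>linear A\<close>] by (simp add: algebra_simps)
  then show ?thesis
    using \<open>norm \<eta> = 1\<close> by simp
qed

lemma increment_perturbed_linear_le: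
  fixes A :: "'a::real_normed_vector \<Rightarrow> 'b::real_normed_vector" and \<eta> :: 'b
  assumes "linear A" and "b \<ge> 0" and "c \<ge> 0" and "norm \<eta> = 1"
    and "\<And>X. F X = A X + (b * norm X + c * norm (A X)) *\<^sub>R \<eta>"
  shows "norm (F (X + Y) - F X - A Y) \<le> b * norm Y + c * norm (A Y)"
proof -
  have "\<bar>b * (norm (X + Y) - norm X)\<bar> \<le> b * norm Y"
    using norm_triangle_ineq3[of "X + Y" X] \<open>b \<ge> 0\<close>
    by (simp add: abs_mult mult_left_mono)
  moreover have "\<bar>c * (norm (A X + A Y) - norm (A X))\<bar> \<le> c * norm (A Y)"
    using norm_triangle_ineq3[of "A X + A Y" "A X"] \<open>c \<ge> 0\<close>
    by (simp add: abs_mult mult_left_mono)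
  ultimately show ?thesis
    unfolding norm_increment_perturbed_linear[OF assms] by linarith
qed

lemma increment_perturbed_linear_at_0:
  fixes A :: "'a::real_normed_vector \<Rightarrow> 'b::real_normed_vector" and \<eta> :: 'b
  assumes "linear A" and "b \<ge> 0" and "c \<ge> 0" and "norm \<eta> = 1"
    and "\<And>X. F X = A X + (b * norm X + c * norm (A X)) *\<^sub>R \<eta>"
  shows "norm (F (0 + Y) - F 0 - A Y) = b * norm Y + c * norm (A Y)"
  unfolding norm_increment_perturbed_linear[OF assms] linear_0[OF \<open>linear A\<close>]
  using \<open>b \<ge> 0\<close> \<open>c \<ge> 0\<close> by simp

lemma AE_lborel_obtain:
  assumes "AE x in (lborel :: 'a::euclidean_space measure). P x"
  obtains x where "P x"
proof -
  have "{x \<in> space lborel. \<not> P x} \<noteq> (UNIV :: 'a set)"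
  proof
    assume "{x \<in> space lborel. \<not> P x} = (UNIV :: 'a set)"
    then have "emeasure (lborel :: 'a measure) UNIV = 0"
      using AE_E2[OF assms] by simp
    then show False
      by simp
  qed
  then show ?thesis
    using that by auto
qed

context
  fixes b c :: real and \<eta> :: "real^2" and F :: "real^2 \<Rightarrow> real^2^2 \<Rightarrow> real^2"
  assumes b: "b \<ge> 0" and c: "c \<ge> 0" and \<eta>: "norm \<eta> = 1"
    and F_eq: "\<And>x X. F x X = CR X + (b * norm X + c * norm (CR X)) *\<^sub>R \<eta>"
begin

lemma increment_perturbed_CR_le:
  "norm (F x (X + Y) - F x X - CR Y) \<le> b * nu CR * norm Y + c * norm (CR Y)"
  using increment_perturbed_linear_le[OF linear_CR b c \<eta> F_eq[of x]] by (simp add: nu_CR)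

lemma AK_condition_perturbed_CR:
  assumes "b > 0" and "c > 0" and "b + c < 1"
  shows "AK_condition CR F"
proof -
  have AK_inequality: "AE x in lborel. \<forall>X Y.
      norm (1 *\<^sub>R (F x (X + Y) - F x Y) - CR X) \<le> b * nu CR * norm X + c * norm (CR X)"
  proof (intro AE_I2 allI)
    fix x X Y
    show "norm (1 *\<^sub>R (F x (X + Y) - F x Y) - CR X) \<le> b * nu CR * norm X + c * norm (CR X)"
      using increment_perturbed_CR_le[of x Y X] by (simp add: add.commute)
  qed
  show ?thesis
    unfolding AK_condition_def
    by (rule exI[of _ "\<lambda>_. 1", OF exI[of _ b, OF exI[of _ c]]]) (use assms AK_inequality in auto)
qed

lemma not_K_condition_perturbed_CR:
  assumes "sqrt 2 * c + b \<ge> 1"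
  shows "\<not> K_condition CR F"
proof
  assume "K_condition CR F"
  then obtain \<beta> where "\<beta> < 1"
    and K_AE: "AE x in lborel. \<forall>X Y. norm ((F x (X + Y) - F x X) - CR Y) \<le> \<beta> * norm Y"
    unfolding K_condition_def nu_CR by auto
  obtain x where K: "\<And>X Y. norm ((F x (X + Y) - F x X) - CR Y) \<le> \<beta> * norm Y"
    by (rule AE_lborel_obtain[OF K_AE]) blast
  have "b * sqrt 2 + c * 2 \<le> \<beta> * sqrt 2"
    using K[of 0 "mat 1"] increment_perturbed_linear_at_0[OF linear_CR b c \<eta> F_eq[of x], of "mat 1"]
    by (simp add: norm_mat_1_vec2 norm_CR_mat_1)
  then have "sqrt 2 * (b + sqrt 2 * c) \<le> sqrt 2 * \<beta>"
    by (simp add: algebra_simps)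
  then show False
    using assms \<open>\<beta> < 1\<close> by simp
qed

end

theorem mainTheorem4:
  fixes b c :: real and \<eta> :: "real^2" and F :: "real^2 \<Rightarrow> real^2^2 \<Rightarrow> real^2"
  assumes "b > 0" and "c > 0" and "b + c < 1" and "sqrt 2 * c + b > 1"
    and "norm \<eta> = 1"
    and "\<And>x X. F x X = CR X + (b * norm X + c * norm (CR X)) *\<^sub>R \<eta>"
  shows "(\<forall>x X Y. norm ((F x (X + Y) - F x X) - CR Y) \<le> b * nu CR * norm Y + c * norm (CR Y))
    \<and> AK_condition CR F
    \<and> \<not> K_condition CR F"
proof -
  have b: "b \<ge> 0" and c: "c \<ge> 0" and "sqrt 2 * c + b \<ge> 1"
    using assms(1,2,4) by auto
  note perturbed = b c assms(5,6)
  show ?thesis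
    using increment_perturbed_CR_le[of b c \<eta> F, OF perturbed]
      AK_condition_perturbed_CR[of b c \<eta> F, OF perturbed assms(1-3)]
      not_K_condition_perturbed_CR[of b c \<eta> F, OF perturbed \<open>sqrt 2 * c + b \<ge> 1\<close>]
    by blast
qed

end
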